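(* Let $n$ be a perfect square and let $G^*$ be the subgraph of the square lattice $\mathbb Z^2$ induced on $\{(x,y)\in\mathbb Z^2: -\sqrt n<2x\le\sqrt n,\ -\sqrt n<2y\le\sqrt n\}$ (which has $n$ vertices). Then, as $n\to\infty$, the demand at the vertex $(0,0)$ in $G^*$ satisfies $$\tfrac14(1+o(1))\,n^{1.5}<\mathbb D((0,0))<\tfrac98(1+o(1))\,n^{1.5}.$$
   Context: The square lattice has vertex set $\mathbb Z^2$ with $(x,y)(x',y')$ an edge iff $|x-x'|+|y-y'|=1$. For a connected graph $G$ and vertices $u,v,w$, let $P(u,v)$ be the number of shortest paths from $u$ to $v$ and $P(u,v;w)$ the number of those that use $w$. The demand at $w$ is $\mathbb D(w)=\sum_{\{u,v\}}P(u,v;w)/P(u,v)$, summed over unordered pairs of distinct vertices. *)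

theory Defs
  imports Complex_Main
begin

definition is_walk :: "'a set \<Rightarrow> ('a \<Rightarrow> 'a \<Rightarrow> bool) \<Rightarrow> 'a list \<Rightarrow> bool" where
  "is_walk V E xs \<longleftrightarrow> xs \<noteq> [] \<and> set xs \<subseteq> V \<and>
     (\<forall>i. Suc i < length xs \<longrightarrow> E (xs ! i) (xs ! Suc i))"

definition walks_between :: "'a set \<Rightarrow> ('a \<Rightarrow> 'a \<Rightarrow> bool) \<Rightarrow> 'a \<Rightarrow> 'a \<Rightarrow> 'a list set" where
  "walks_between V E u v = {xs. is_walk V E xs \<and> hd xs = u \<and> last xs = v}"

text \<open>Shortest paths from u to v: walks from u to v of minimum length
  (such walks are automatically paths).\<close>
definition shortest_paths :: "'a set \<Rightarrow> ('a \<Rightarrow> 'a \<Rightarrow> bool) \<Rightarrow> 'a \<Rightarrow> 'a \<Rightarrow> 'a list set" where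
  "shortest_paths V E u v = {xs \<in> walks_between V E u v.
      \<forall>ys \<in> walks_between V E u v. length xs \<le> length ys}"

definition num_sp :: "'a set \<Rightarrow> ('a \<Rightarrow> 'a \<Rightarrow> bool) \<Rightarrow> 'a \<Rightarrow> 'a \<Rightarrow> nat" where
  "num_sp V E u v = card (shortest_paths V E u v)"

definition num_sp_through :: "'a set \<Rightarrow> ('a \<Rightarrow> 'a \<Rightarrow> bool) \<Rightarrow> 'a \<Rightarrow> 'a \<Rightarrow> 'a \<Rightarrow> nat" where
  "num_sp_through V E u v w = card {xs \<in> shortest_paths V E u v. w \<in> set xs}"

text \<open>Demand at w: sum over unordered pairs {u,v} of distinct vertices of
  P(u,v;w)/P(u,v).  An unordered pair is a 2-element subset S of V; u, v
  are its two elements.\<close>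
definition demand :: "'a set \<Rightarrow> ('a \<Rightarrow> 'a \<Rightarrow> bool) \<Rightarrow> 'a \<Rightarrow> real" where
  "demand V E w = (\<Sum>S \<in> {S. S \<subseteq> V \<and> card S = 2}.
      (let u = (SOME u. u \<in> S); v = (SOME v. v \<in> S - {u})
       in real (num_sp_through V E u v w) / real (num_sp V E u v)))"

definition lattice_adj :: "int \<times> int \<Rightarrow> int \<times> int \<Rightarrow> bool" where
  "lattice_adj p q \<longleftrightarrow> \<bar>fst p - fst q\<bar> + \<bar>snd p - snd q\<bar> = 1"

definition box_vertices :: "nat \<Rightarrow> (int \<times> int) set" where
  "box_vertices n = {(x, y). - sqrt (real n) < 2 * real_of_int x \<and> 2 * real_of_int x \<le> sqrt (real n)
                        \<and> - sqrt (real n) < 2 * real_of_int y \<and> 2 * real_of_int y \<le> sqrt (real n)}"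

end

theory Submission
  imports Defs
begin

text \<open>The box is convex for the l1 metric, so its shortest paths are exactly the monotone
  lattice paths, and the demand at the origin is the sum over pairs of the proportion of such
  geodesics passing through the origin. Along each anti-diagonal level of the rectangle spanned
  by two points these proportions sum to 1, since every geodesic crosses each level once.

  Up to swapping and reflecting, a pair contributes only if it straddles the origin. Group such
  pairs by their shape: the displacement between the two points together with the level of the
  origin. The pairs of one shape are translates of a single pair with the origin sweeping one
  level, so each shape contributes at most 1, and exactly 1 when all these translates fit into
  the box. In a box of side m every shape has a representative on one of four faces, so there
  are at most about m^3/2 shapes in each orientation; conversely all shapes with displacement
  in [1, m/2]^2 fit, giving about m^3/8 in each orientation. Hence the demand lies between
  roughly m^3/4 and m^3, where m^3 = n^1.5.\<close>

section \<open>Lattice geodesics\<close>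

definition l1_dist :: "int \<times> int \<Rightarrow> int \<times> int \<Rightarrow> int" where
  "l1_dist p q = \<bar>fst p - fst q\<bar> + \<bar>snd p - snd q\<bar>"

definition lattice_chain :: "(int \<times> int) list \<Rightarrow> bool" where
  "lattice_chain xs \<longleftrightarrow> (\<forall>i. Suc i < length xs \<longrightarrow> lattice_adj (xs ! i) (xs ! Suc i))"

lemma lattice_adj_iff_l1_dist: "lattice_adj p q \<longleftrightarrow> l1_dist p q = 1"
  by (simp add: lattice_adj_def l1_dist_def)

lemma l1_dist_commute: "l1_dist p q = l1_dist q p"
  by (simp add: l1_dist_def abs_minus_commute)

lemma l1_dist_triangle: "l1_dist p r \<le> l1_dist p q + l1_dist q r"
  unfolding l1_dist_def by linarith

lemma l1_dist_nonneg: "0 \<le> l1_dist p q"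
  by (simp add: l1_dist_def)

lemma l1_dist_eq_0_iff: "l1_dist p q = 0 \<longleftrightarrow> p = q"
  by (auto simp: l1_dist_def prod_eq_iff)

lemma l1_dist_self [simp]: "l1_dist p p = 0"
  by (simp add: l1_dist_eq_0_iff)

lemma is_walk_lattice_iff: "is_walk V lattice_adj xs \<longleftrightarrow> xs \<noteq> [] \<and> set xs \<subseteq> V \<and> lattice_chain xs"
  by (simp add: is_walk_def lattice_chain_def)

lemma lattice_chain_Cons:
  "lattice_chain (u # xs) \<longleftrightarrow> lattice_chain xs \<and> (xs \<noteq> [] \<longrightarrow> lattice_adj u (hd xs))"
proof -
  have "(\<forall>i. Suc i < Suc (length xs) \<longrightarrow> lattice_adj ((u # xs) ! i) (xs ! i)) \<longleftrightarrow>
      lattice_chain xs \<and> (xs \<noteq> [] \<longrightarrow> lattice_adj u (hd xs))"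
    unfolding lattice_chain_def by (auto simp: hd_conv_nth nth_Cons split: nat.splits)
  then show ?thesis
    by (simp add: lattice_chain_def)
qed

lemma lattice_chain_nth_dist:
  assumes "lattice_chain xs" "i \<le> j" "j < length xs"
  shows "l1_dist (xs ! i) (xs ! j) \<le> int (j - i)"
  using assms(2,3)
proof (induction j)
  case 0
  then show ?case
    by simp
next
  case (Suc j)
  show ?case
  proof (cases "i = Suc j")
    case True
    then show ?thesis
      by simp
  next
    case False
    then have "i \<le> j" using Suc.prems by simp
    moreover have "l1_dist (xs ! j) (xs ! Suc j) = 1"
      using assms(1) Suc.prems unfolding lattice_chain_def lattice_adj_iff_l1_dist by auto
    ultimately show ?thesis
      using Suc l1_dist_triangle[of "xs ! i" "xs ! Suc j" "xs ! j"] by simp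
  qed
qed

lemma lattice_chain_hd_last_dist:
  assumes "lattice_chain xs" "xs \<noteq> []"
  shows "l1_dist (hd xs) (last xs) + 1 \<le> int (length xs)"
proof -
  have "int (length xs - 1) = int (length xs) - 1"
    using assms(2) by (cases xs) auto
  then show ?thesis
    using lattice_chain_nth_dist[OF assms(1), of 0 "length xs - 1"] assms(2)
    by (simp add: hd_conv_nth last_conv_nth)
qed

lemma lattice_chain_exists:
  "l1_dist u v = int k \<Longrightarrow>
     \<exists>xs. lattice_chain xs \<and> xs \<noteq> [] \<and> hd xs = u \<and> last xs = v \<and> length xs = k + 1"
proof (induction k arbitrary: u)
  case 0
  then show ?case by (intro exI[of _ "[u]"]) (auto simp: l1_dist_eq_0_iff lattice_chain_def)
next
  case (Suc k)
  define u' where "u' = (if fst u < fst v then (fst u + 1, snd u)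
      else if fst v < fst u then (fst u - 1, snd u)
      else if snd u < snd v then (fst u, snd u + 1) else (fst u, snd u - 1))"
  have "lattice_adj u u'" "l1_dist u' v = int k"
    using Suc.prems by (auto simp: u'_def lattice_adj_def l1_dist_def)
  with Suc.IH obtain xs where "lattice_chain xs" "xs \<noteq> []" "hd xs = u'" "last xs = v" "length xs = k + 1"
    by blast
  with \<open>lattice_adj u u'\<close> show ?case
    by (intro exI[of _ "u # xs"]) (auto simp: lattice_chain_Cons)
qed

definition geodesics :: "int \<times> int \<Rightarrow> int \<times> int \<Rightarrow> (int \<times> int) list set" where
  "geodesics u v = {xs. lattice_chain xs \<and> xs \<noteq> [] \<and> hd xs = u \<and> last xs = v
      \<and> int (length xs) = l1_dist u v + 1}"

lemma geodesics_nth_dist: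
  assumes "xs \<in> geodesics u v" "i < length xs"
  shows "l1_dist u (xs ! i) = int i" "l1_dist (xs ! i) v = l1_dist u v - int i"
proof -
  have chain: "lattice_chain xs" and ne: "xs \<noteq> []" and "hd xs = u" "last xs = v"
    and len: "int (length xs) = l1_dist u v + 1"
    using assms(1) by (auto simp: geodesics_def)
  then have "l1_dist u (xs ! i) \<le> int i"
    using lattice_chain_nth_dist[OF chain, of 0 i] assms(2) by (simp add: hd_conv_nth)
  moreover have "l1_dist (xs ! i) v \<le> l1_dist u v - int i"
    using lattice_chain_nth_dist[OF chain, of i "length xs - 1"] assms(2) len \<open>last xs = v\<close> ne
    by (simp add: last_conv_nth of_nat_diff)
  moreover have "l1_dist u v \<le> l1_dist u (xs ! i) + l1_dist (xs ! i) v"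
    by (rule l1_dist_triangle)
  ultimately show "l1_dist u (xs ! i) = int i" "l1_dist (xs ! i) v = l1_dist u v - int i"
    by linarith+
qed

lemma geodesics_between:
  assumes "xs \<in> geodesics u v" "z \<in> set xs"
  shows "l1_dist u z + l1_dist z v = l1_dist u v"
  using assms geodesics_nth_dist[OF assms(1)] by (auto simp: in_set_conv_nth)

lemma geodesics_nonempty: "geodesics u v \<noteq> {}"
proof -
  have "l1_dist u v = int (nat (l1_dist u v))"
    using l1_dist_nonneg by simp
  from lattice_chain_exists[OF this] show ?thesis
    using l1_dist_nonneg[of u v] by (auto simp: geodesics_def)
qed

lemma finite_geodesics: "finite (geodesics u v)"
proof -
  define D where "D = l1_dist u v"
  define A where "A = {fst u - D..fst u + D} \<times> {snd u - D..snd u + D}"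
  have "geodesics u v \<subseteq> {xs. set xs \<subseteq> A \<and> length xs = nat D + 1}"
  proof
    fix xs assume xs: "xs \<in> geodesics u v"
    have "set xs \<subseteq> A"
    proof
      fix z assume "z \<in> set xs"
      then have "l1_dist u z \<le> D"
        using xs geodesics_between l1_dist_nonneg[of z v] unfolding D_def by fastforce
      then show "z \<in> A"
        unfolding A_def l1_dist_def by (cases z) auto
    qed
    moreover have "int (length xs) = D + 1" "0 \<le> D"
      using xs l1_dist_nonneg by (simp_all add: geodesics_def D_def)
    ultimately show "xs \<in> {xs. set xs \<subseteq> A \<and> length xs = nat D + 1}"
      by simp
  qed
  moreover have "finite {xs. set xs \<subseteq> A \<and> length xs = nat D + 1}"
    by (rule finite_lists_length_eq) (simp add: A_def)
  ultimately show ?thesis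
    by (rule finite_subset)
qed

lemma card_geodesics_pos: "0 < card (geodesics u v)"
  using finite_geodesics geodesics_nonempty by (simp add: card_gt_0_iff)

definition int_rect :: "int \<Rightarrow> int \<Rightarrow> int \<Rightarrow> int \<Rightarrow> (int \<times> int) set" where
  "int_rect a b c d = {a..b} \<times> {c..d}"

lemma finite_int_rect: "finite (int_rect a b c d)"
  by (simp add: int_rect_def)

lemma between_in_int_rect:
  assumes "u \<in> int_rect a b c d" "v \<in> int_rect a b c d" "l1_dist u z + l1_dist z v = l1_dist u v"
  shows "z \<in> int_rect a b c d"
  using assms unfolding int_rect_def l1_dist_def
  by (cases u; cases v; cases z) (auto simp: abs_if split: if_splits)

lemma shortest_paths_int_rect:
  assumes "u \<in> int_rect a b c d" "v \<in> int_rect a b c d"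
  shows "shortest_paths (int_rect a b c d) lattice_adj u v = geodesics u v"
proof -
  let ?W = "walks_between (int_rect a b c d) lattice_adj u v"
  have walk_long: "l1_dist u v + 1 \<le> int (length ys)" if "ys \<in> ?W" for ys
    using that lattice_chain_hd_last_dist[of ys] by (auto simp: walks_between_def is_walk_lattice_iff)
  have geodesic_walk: "xs \<in> ?W" if "xs \<in> geodesics u v" for xs
    using that between_in_int_rect[OF assms geodesics_between[OF that]]
    by (auto simp: geodesics_def walks_between_def is_walk_lattice_iff)
  obtain xs0 where xs0: "xs0 \<in> geodesics u v"
    using geodesics_nonempty by blast
  show ?thesis
  proof (intro equalityI subsetI)
    fix xs assume "xs \<in> shortest_paths (int_rect a b c d) lattice_adj u v"
    then have "xs \<in> ?W" "length xs \<le> length xs0"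
      using geodesic_walk[OF xs0] by (auto simp: shortest_paths_def)
    with walk_long[of xs] xs0 show "xs \<in> geodesics u v"
      by (auto simp: walks_between_def is_walk_lattice_iff geodesics_def)
  next
    fix xs assume "xs \<in> geodesics u v"
    then show "xs \<in> shortest_paths (int_rect a b c d) lattice_adj u v"
      using geodesic_walk walk_long by (fastforce simp: shortest_paths_def geodesics_def)
  qed
qed

section \<open>Proportion of geodesics through a point\<close>

definition through_ratio :: "int \<times> int \<Rightarrow> int \<times> int \<Rightarrow> int \<times> int \<Rightarrow> real" where
  "through_ratio u v w =
     real (card {xs \<in> geodesics u v. w \<in> set xs}) / real (card (geodesics u v))"

lemma through_ratio_nonneg: "0 \<le> through_ratio u v w"
  by (simp add: through_ratio_def)

lemma through_ratio_eq_0: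
  assumes "l1_dist u w + l1_dist w v \<noteq> l1_dist u v"
  shows "through_ratio u v w = 0"
proof -
  have no_geodesic: "{xs \<in> geodesics u v. w \<in> set xs} = {}"
    using geodesics_between assms by blast
  show ?thesis
    unfolding through_ratio_def no_geodesic by simp
qed

lemma geodesics_isometry:
  assumes "bij \<phi>" and isom: "\<And>a b. l1_dist (\<phi> a) (\<phi> b) = l1_dist a b"
  shows "geodesics (\<phi> u) (\<phi> v) = map \<phi> ` geodesics u v"
proof -
  have chain_map: "lattice_chain (map f xs) \<longleftrightarrow> lattice_chain xs"
    if "\<And>a b. l1_dist (f a) (f b) = l1_dist a b" for f :: "int \<times> int \<Rightarrow> int \<times> int" and xs
    using that by (simp add: lattice_chain_def lattice_adj_iff_l1_dist)
  have geo_map: "map f xs \<in> geodesics (f a) (f b)"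
    if "\<And>a b. l1_dist (f a) (f b) = l1_dist a b" "xs \<in> geodesics a b" for f a b xs
    using that chain_map[of f] by (simp add: geodesics_def hd_map last_map)
  have inv_isom: "l1_dist (inv \<phi> a) (inv \<phi> b) = l1_dist a b" for a b
    using isom[of "inv \<phi> a" "inv \<phi> b"] \<open>bij \<phi>\<close> by (simp add: bij_is_surj surj_f_inv_f)
  show ?thesis
  proof (intro equalityI subsetI)
    fix ys assume "ys \<in> geodesics (\<phi> u) (\<phi> v)"
    then have "map (inv \<phi>) ys \<in> geodesics u v"
      using geo_map[OF inv_isom] \<open>bij \<phi>\<close> by (metis bij_is_inj inv_f_f)
    moreover have "ys = map \<phi> (map (inv \<phi>) ys)"
      using \<open>bij \<phi>\<close> by (simp add: bij_is_surj surj_f_inv_f map_idI)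
    ultimately show "ys \<in> map \<phi> ` geodesics u v"
      by blast
  qed (use geo_map[OF isom] in blast)
qed

lemma through_ratio_isometry:
  assumes "bij \<phi>" "\<And>a b. l1_dist (\<phi> a) (\<phi> b) = l1_dist a b"
  shows "through_ratio (\<phi> u) (\<phi> v) (\<phi> w) = through_ratio u v w"
proof -
  have inj_map: "inj (map \<phi>)"
    using \<open>bij \<phi>\<close> by (simp add: bij_is_inj inj_mapI)
  have "{ys \<in> geodesics (\<phi> u) (\<phi> v). \<phi> w \<in> set ys} = map \<phi> ` {xs \<in> geodesics u v. w \<in> set xs}"
    unfolding geodesics_isometry[OF assms] using \<open>bij \<phi>\<close> by (auto simp: bij_is_inj inj_image_mem_iff)
  then show ?thesis
    unfolding through_ratio_def geodesics_isometry[OF assms]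
    by (simp add: card_image inj_on_subset[OF inj_map])
qed

lemma through_ratio_translate:
  "through_ratio (fst u + a, snd u + b) (fst v + a, snd v + b) (fst w + a, snd w + b) =
     through_ratio u v w"
proof -
  have "bij (\<lambda>p :: int \<times> int. (fst p + a, snd p + b))"
    by (rule o_bij[of "\<lambda>p. (fst p - a, snd p - b)"]) (auto simp: fun_eq_iff)
  then show ?thesis
    by (rule through_ratio_isometry[of "\<lambda>p. (fst p + a, snd p + b)", simplified])
      (simp add: l1_dist_def)
qed

definition reflect_x :: "int \<times> int \<Rightarrow> int \<times> int" where
  "reflect_x p = (- fst p, snd p)"

lemma reflect_x_reflect_x [simp]: "reflect_x (reflect_x p) = p"
  by (simp add: reflect_x_def)

lemma map_prod_reflect_x_involution [simp]:
  "map_prod reflect_x reflect_x (map_prod reflect_x reflect_x p) = p"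
  by (simp add: map_prod_def split_beta)

lemma inj_map_prod_reflect_x: "inj (map_prod reflect_x reflect_x)"
  by (metis map_prod_reflect_x_involution injI)

lemma through_ratio_reflect_x:
  "through_ratio (reflect_x u) (reflect_x v) (reflect_x w) = through_ratio u v w"
proof -
  have "bij reflect_x"
    by (rule o_bij[of reflect_x]) (auto simp: fun_eq_iff)
  then show ?thesis
    by (rule through_ratio_isometry) (simp add: reflect_x_def l1_dist_def abs_minus_commute)
qed

lemma lattice_chain_rev: "lattice_chain xs \<Longrightarrow> lattice_chain (rev xs)"
  unfolding lattice_chain_def
proof (intro allI impI)
  fix i assume chain: "\<forall>i. Suc i < length xs \<longrightarrow> lattice_adj (xs ! i) (xs ! Suc i)"
    and i: "Suc i < length (rev xs)"
  let ?j = "length xs - Suc (Suc i)"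
  have "lattice_adj (xs ! ?j) (xs ! Suc ?j)" and "Suc ?j = length xs - Suc i"
    using chain i by auto
  then show "lattice_adj (rev xs ! i) (rev xs ! Suc i)"
    using i by (simp add: rev_nth lattice_adj_def abs_minus_commute add.commute)
qed

lemma geodesics_rev: "geodesics v u = rev ` geodesics u v"
proof -
  have rev_geo: "rev xs \<in> geodesics b a" if "xs \<in> geodesics a b" for a b xs
    using that by (auto simp: geodesics_def lattice_chain_rev hd_rev last_rev l1_dist_commute)
  show ?thesis
  proof (intro equalityI subsetI)
    fix ys assume "ys \<in> geodesics v u"
    then show "ys \<in> rev ` geodesics u v"
      using rev_geo[of ys v u] by (metis rev_rev_ident imageI)
  qed (use rev_geo in blast)
qed

lemma through_ratio_commute: "through_ratio v u w = through_ratio u v w"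
proof -
  have "{ys \<in> geodesics v u. w \<in> set ys} = rev ` {xs \<in> geodesics u v. w \<in> set xs}"
    unfolding geodesics_rev[of v u] by auto
  then show ?thesis
    unfolding through_ratio_def by (simp add: geodesics_rev[of v u] card_image)
qed

definition rect_level :: "int \<times> int \<Rightarrow> int \<times> int \<Rightarrow> int \<Rightarrow> (int \<times> int) set" where
  "rect_level u v k = {w \<in> int_rect (fst u) (fst v) (snd u) (snd v). l1_dist u w = k}"

lemma finite_rect_level: "finite (rect_level u v k)"
  by (simp add: rect_level_def finite_int_rect)

lemma geodesic_nth_rect_level:
  assumes "xs \<in> geodesics u v" "fst u \<le> fst v" "snd u \<le> snd v" "0 \<le> k" "k \<le> l1_dist u v"
  shows "nat k < length xs" "xs ! nat k \<in> rect_level u v k"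
proof -
  have "int (length xs) = l1_dist u v + 1"
    using assms(1) by (simp add: geodesics_def)
  then show k: "nat k < length xs"
    using assms(4,5) by linarith
  have uv: "u \<in> int_rect (fst u) (fst v) (snd u) (snd v)" "v \<in> int_rect (fst u) (fst v) (snd u) (snd v)"
    using assms(2,3) by (auto simp: int_rect_def mem_Times_iff)
  show "xs ! nat k \<in> rect_level u v k"
    using between_in_int_rect[OF uv geodesics_between[OF assms(1) nth_mem[OF k]]]
      geodesics_nth_dist(1)[OF assms(1) k] assms(4)
    by (simp add: rect_level_def)
qed

lemma geodesic_meets_rect_level:
  assumes "xs \<in> geodesics u v" "fst u \<le> fst v" "snd u \<le> snd v" "0 \<le> k" "k \<le> l1_dist u v"
    and "w \<in> rect_level u v k"
  shows "w \<in> set xs \<longleftrightarrow> xs ! nat k = w"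
proof
  assume "w \<in> set xs"
  then obtain i where "i < length xs" "w = xs ! i"
    by (auto simp: in_set_conv_nth)
  moreover from this have "int i = k"
    using geodesics_nth_dist(1)[OF assms(1)] assms(6) by (simp add: rect_level_def)
  ultimately show "xs ! nat k = w"
    by auto
next
  assume "xs ! nat k = w"
  then show "w \<in> set xs"
    using geodesic_nth_rect_level(1)[OF assms(1-5)] nth_mem by blast
qed

lemma sum_through_ratio_rect_level:
  assumes "fst u \<le> fst v" "snd u \<le> snd v" "0 \<le> k" "k \<le> l1_dist u v"
  shows "(\<Sum>w\<in>rect_level u v k. through_ratio u v w) = 1"
proof -
  let ?G = "geodesics u v"
  have "(\<lambda>xs. xs ! nat k) ` ?G \<subseteq> rect_level u v k"
    using geodesic_nth_rect_level(2)[OF _ assms] by blast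
  from sum.group[OF finite_geodesics finite_rect_level this, of "\<lambda>_. 1::nat"]
  have "(\<Sum>w\<in>rect_level u v k. card {xs \<in> ?G. xs ! nat k = w}) = card ?G"
    by simp
  also have "(\<Sum>w\<in>rect_level u v k. card {xs \<in> ?G. xs ! nat k = w}) =
      (\<Sum>w\<in>rect_level u v k. card {xs \<in> ?G. w \<in> set xs})"
    using geodesic_meets_rect_level[OF _ assms] by (intro sum.cong refl arg_cong[where f = card]) blast
  finally have "(\<Sum>w\<in>rect_level u v k. real (card {xs \<in> ?G. w \<in> set xs})) = real (card ?G)"
    by (simp flip: of_nat_sum)
  then show ?thesis
    using card_geodesics_pos[of u v] by (simp add: through_ratio_def flip: sum_divide_distrib)
qed

section \<open>Pairs around the origin and their shapes\<close>

definition origin_ratio :: "(int \<times> int) \<times> (int \<times> int) \<Rightarrow> real" where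
  "origin_ratio p = through_ratio (fst p) (snd p) (0, 0)"

lemma origin_ratio_nonneg: "0 \<le> origin_ratio p"
  by (simp add: origin_ratio_def through_ratio_nonneg)

definition straddles_origin :: "(int \<times> int) \<times> (int \<times> int) \<Rightarrow> bool" where
  "straddles_origin p \<longleftrightarrow>
     fst (fst p) \<le> 0 \<and> snd (fst p) \<le> 0 \<and> 0 \<le> fst (snd p) \<and> 0 \<le> snd (snd p)"

text \<open>For a pair straddling the origin: the displacement between its points, and the
  level of the origin in the rectangle they span.\<close>

definition pair_shape :: "(int \<times> int) \<times> (int \<times> int) \<Rightarrow> (int \<times> int) \<times> int" where
  "pair_shape p = ((fst (snd p) - fst (fst p), snd (snd p) - snd (fst p)), - fst (fst p) - snd (fst p))"

definition shape_class :: "(int \<times> int) \<times> int \<Rightarrow> ((int \<times> int) \<times> (int \<times> int)) set" where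
  "shape_class s = {p. straddles_origin p \<and> pair_shape p = s}"

lemma shape_class_eq_image:
  "shape_class (d, k) =
     (\<lambda>w. ((- fst w, - snd w), (fst d - fst w, snd d - snd w))) ` rect_level (0, 0) d k"
proof (intro equalityI subsetI)
  fix p assume "p \<in> shape_class (d, k)"
  then show "p \<in> (\<lambda>w. ((- fst w, - snd w), (fst d - fst w, snd d - snd w))) ` rect_level (0, 0) d k"
    by (intro image_eqI[of _ _ "(- fst (fst p), - snd (fst p))"])
      (auto simp: shape_class_def straddles_origin_def pair_shape_def rect_level_def
        int_rect_def l1_dist_def)
qed (auto simp: shape_class_def straddles_origin_def pair_shape_def rect_level_def
       int_rect_def l1_dist_def)

lemma finite_shape_class: "finite (shape_class s)"
  by (cases s) (simp add: shape_class_eq_image finite_rect_level)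

lemma sum_origin_ratio_shape_class:
  assumes "0 \<le> fst d" "0 \<le> snd d" "0 \<le> k" "k \<le> fst d + snd d"
  shows "sum origin_ratio (shape_class (d, k)) = 1"
proof -
  define h where "h w = ((- fst w, - snd w), (fst d - fst w, snd d - snd w))" for w :: "int \<times> int"
  have "inj h"
    by (rule injI) (auto simp: h_def prod_eq_iff)
  moreover have "origin_ratio (h w) = through_ratio (0, 0) d w" for w
    using through_ratio_translate[of "fst (h w)" "fst w" "snd w" "snd (h w)" "(0, 0)"]
    by (simp add: origin_ratio_def h_def)
  ultimately have "sum origin_ratio (shape_class (d, k)) =
      (\<Sum>w\<in>rect_level (0, 0) d k. through_ratio (0, 0) d w)"
    unfolding shape_class_eq_image h_def[symmetric] by (simp add: sum.reindex inj_on_subset)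
  also have "\<dots> = 1"
    using assms by (intro sum_through_ratio_rect_level) (auto simp: l1_dist_def)
  finally show ?thesis .
qed

definition straddling_pairs :: "(int \<times> int) set \<Rightarrow> ((int \<times> int) \<times> (int \<times> int)) set" where
  "straddling_pairs B = {p \<in> B \<times> B. straddles_origin p}"

lemma sum_origin_ratio_straddling_le_card_shapes:
  assumes "finite B"
  shows "sum origin_ratio (straddling_pairs B) \<le> card (pair_shape ` straddling_pairs B)"
proof -
  let ?X = "straddling_pairs B"
  have finX: "finite ?X"
    using assms by (simp add: straddling_pairs_def)
  have fiber_le_1: "(\<Sum>p\<in>{p \<in> ?X. pair_shape p = s}. origin_ratio p) \<le> 1"
    if "s \<in> pair_shape ` ?X" for s
  proof -
    obtain d k where s: "s = (d, k)"
      by fastforce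
    from that obtain p where "p \<in> ?X" "pair_shape p = (d, k)"
      using s by blast
    then have ranges: "0 \<le> fst d" "0 \<le> snd d" "0 \<le> k" "k \<le> fst d + snd d"
      by (auto simp: straddling_pairs_def straddles_origin_def pair_shape_def)
    have "(\<Sum>p\<in>{p \<in> ?X. pair_shape p = s}. origin_ratio p) \<le> sum origin_ratio (shape_class (d, k))"
      using finite_shape_class origin_ratio_nonneg
      by (intro sum_mono2) (auto simp: s shape_class_def straddling_pairs_def)
    also have "\<dots> = 1"
      using sum_origin_ratio_shape_class[OF ranges] .
    finally show ?thesis .
  qed
  have "sum origin_ratio ?X =
      (\<Sum>s\<in>pair_shape ` ?X. \<Sum>p\<in>{p \<in> ?X. pair_shape p = s}. origin_ratio p)"
    using finX by (intro sum.group[symmetric]) auto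
  also have "\<dots> \<le> (\<Sum>s\<in>pair_shape ` ?X. 1)"
    using fiber_le_1 by (rule sum_mono)
  finally show ?thesis
    by simp
qed

definition diag_shift :: "(int \<times> int) \<times> (int \<times> int) \<Rightarrow> (int \<times> int) \<times> (int \<times> int)" where
  "diag_shift p = ((fst (fst p) - 1, snd (fst p) + 1), (fst (snd p) - 1, snd (snd p) + 1))"

lemma pair_shape_diag_shift: "pair_shape (diag_shift p) = pair_shape p"
  by (simp add: pair_shape_def diag_shift_def)

lemma card_shapes_le_extremal:
  assumes "finite X"
  shows "card (pair_shape ` X) \<le> card {q \<in> X. diag_shift q \<notin> X}"
proof -
  have "pair_shape ` X \<subseteq> pair_shape ` {q \<in> X. diag_shift q \<notin> X}"
  proof
    fix s assume "s \<in> pair_shape ` X"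
    let ?F = "{q \<in> X. pair_shape q = s}"
    define m where "m = Min ((fst \<circ> fst) ` ?F)"
    have "m \<in> (fst \<circ> fst) ` ?F"
      unfolding m_def using assms \<open>s \<in> pair_shape ` X\<close> by (intro Min_in) auto
    then obtain q where q: "q \<in> ?F" "fst (fst q) = m"
      by auto
    have "diag_shift q \<notin> X"
    proof
      assume "diag_shift q \<in> X"
      then have "fst (fst (diag_shift q)) \<in> (fst \<circ> fst) ` ?F"
        using q(1) by (auto simp: pair_shape_diag_shift)
      then have "m \<le> fst (fst (diag_shift q))"
        unfolding m_def using assms by (intro Min_le) auto
      then show False
        using q(2) by (simp add: diag_shift_def)
    qed
    with q(1) show "s \<in> pair_shape ` {q \<in> X. diag_shift q \<notin> X}"
      by blast
  qed
  then have "card (pair_shape ` X) \<le> card (pair_shape ` {q \<in> X. diag_shift q \<notin> X})"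
    using assms by (intro card_mono) auto
  also have "\<dots> \<le> card {q \<in> X. diag_shift q \<notin> X}"
    by (rule card_image_le) (use assms in auto)
  finally show ?thesis .
qed

lemma straddling_int_rect_diag_shift:
  assumes "q \<in> straddling_pairs (int_rect a b c d)" "diag_shift q \<notin> straddling_pairs (int_rect a b c d)"
  shows "fst (fst q) = a \<or> snd (fst q) = 0 \<or> fst (snd q) = 0 \<or> snd (snd q) = d"
  using assms
  by (cases q) (auto simp: straddling_pairs_def straddles_origin_def diag_shift_def int_rect_def)

lemma card_le_cube:
  assumes "inj_on g Y" "g ` Y \<subseteq> A \<times> B \<times> C" "finite A" "finite B" "finite C"
    and "card A \<le> F" "card B \<le> F" "card C \<le> F"
  shows "card Y \<le> F ^ 3"
proof -
  have "card Y = card (g ` Y)"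
    using assms(1) by (simp add: card_image)
  also have "\<dots> \<le> card A * (card B * card C)"
    using assms(2-5) card_mono[of "A \<times> B \<times> C"] by (simp add: card_cartesian_product)
  also have "\<dots> \<le> F * (F * F)"
    using assms(6-8) by (intro mult_le_mono) auto
  also have "\<dots> = F ^ 3"
    by (simp add: power3_eq_cube)
  finally show ?thesis .
qed

lemma card_straddling_int_rect_faces:
  assumes "nat (1 - a) \<le> F" "nat (1 + b) \<le> F" "nat (1 - c) \<le> F" "nat (1 + d) \<le> F"
  defines "X \<equiv> straddling_pairs (int_rect a b c d)"
  shows "card {q \<in> X. fst (fst q) = a} \<le> F ^ 3" "card {q \<in> X. snd (fst q) = 0} \<le> F ^ 3"
    "card {q \<in> X. fst (snd q) = 0} \<le> F ^ 3" "card {q \<in> X. snd (snd q) = d} \<le> F ^ 3"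
proof -
  have ranges: "fst (fst q) \<in> {a..0}" "snd (fst q) \<in> {c..0}" "fst (snd q) \<in> {0..b}"
    "snd (snd q) \<in> {0..d}" if "q \<in> X" for q
    using that by (auto simp: X_def straddling_pairs_def straddles_origin_def int_rect_def mem_Times_iff)
  have cards: "card {a..0} \<le> F" "card {c..0} \<le> F" "card {0..b} \<le> F" "card {0..d} \<le> F"
    using assms by (simp_all add: add.commute)
  show "card {q \<in> X. fst (fst q) = a} \<le> F ^ 3"
    using ranges cards
    by (intro card_le_cube[where g = "\<lambda>q. (snd (fst q), fst (snd q), snd (snd q))"
          and A = "{c..0}" and B = "{0..b}" and C = "{0..d}"])
      (auto intro!: inj_onI simp: prod_eq_iff)
  show "card {q \<in> X. snd (fst q) = 0} \<le> F ^ 3"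
    using ranges cards
    by (intro card_le_cube[where g = "\<lambda>q. (fst (fst q), fst (snd q), snd (snd q))"
          and A = "{a..0}" and B = "{0..b}" and C = "{0..d}"])
      (auto intro!: inj_onI simp: prod_eq_iff)
  show "card {q \<in> X. fst (snd q) = 0} \<le> F ^ 3"
    using ranges cards
    by (intro card_le_cube[where g = "\<lambda>q. (fst (fst q), snd (fst q), snd (snd q))"
          and A = "{a..0}" and B = "{c..0}" and C = "{0..d}"])
      (auto intro!: inj_onI simp: prod_eq_iff)
  show "card {q \<in> X. snd (snd q) = d} \<le> F ^ 3"
    using ranges cards
    by (intro card_le_cube[where g = "\<lambda>q. (fst (fst q), snd (fst q), fst (snd q))"
          and A = "{a..0}" and B = "{c..0}" and C = "{0..b}"])
      (auto intro!: inj_onI simp: prod_eq_iff)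
qed

text \<open>A shape class is a diagonal line of translates; its member that the diagonal shift cannot
  move further inside the box lies on one of four faces of the box.\<close>

lemma card_shapes_straddling_int_rect:
  assumes "nat (1 - a) \<le> F" "nat (1 + b) \<le> F" "nat (1 - c) \<le> F" "nat (1 + d) \<le> F"
  shows "card (pair_shape ` straddling_pairs (int_rect a b c d)) \<le> 4 * F ^ 3"
proof -
  let ?X = "straddling_pairs (int_rect a b c d)"
  let ?F1 = "{q \<in> ?X. fst (fst q) = a}" and ?F2 = "{q \<in> ?X. snd (fst q) = 0}"
    and ?F3 = "{q \<in> ?X. fst (snd q) = 0}" and ?F4 = "{q \<in> ?X. snd (snd q) = d}"
  have finX: "finite ?X"
    by (simp add: straddling_pairs_def finite_int_rect)
  have "card (pair_shape ` ?X) \<le> card {q \<in> ?X. diag_shift q \<notin> ?X}"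
    using finX by (rule card_shapes_le_extremal)
  also have "\<dots> \<le> card (?F1 \<union> ?F2 \<union> ?F3 \<union> ?F4)"
    using finX straddling_int_rect_diag_shift[of _ a b c d] by (intro card_mono) auto
  also have "\<dots> \<le> card ?F1 + card ?F2 + card ?F3 + card ?F4"
    using card_Un_le[of ?F1 ?F2] card_Un_le[of "?F1 \<union> ?F2" ?F3] card_Un_le[of "?F1 \<union> ?F2 \<union> ?F3" ?F4]
    by linarith
  also have "\<dots> \<le> 4 * F ^ 3"
    using card_straddling_int_rect_faces[OF assms] by linarith
  finally show ?thesis .
qed

lemma cube_le_card_shape_range:
  "real M ^ 3 \<le> real (card (SIGMA e:{1..int M} \<times> {1..int M}. {0..fst e + snd e}))"
proof -
  let ?S = "{1..int M} \<times> {1..int M}"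
  define f where "f e = fst e + snd e + 1" for e :: "int \<times> int"
  define \<sigma> where "\<sigma> e = (int M + 1 - fst e, int M + 1 - snd e)" for e :: "int \<times> int"
  have "sum f ?S = (\<Sum>e\<in>?S. f (\<sigma> e))"
    by (rule sum.reindex_bij_witness[of _ \<sigma> \<sigma>]) (auto simp: \<sigma>_def)
  then have "2 * sum f ?S = (\<Sum>e\<in>?S. f e + f (\<sigma> e))"
    by (simp add: sum.distrib)
  also have "\<dots> = (\<Sum>e\<in>?S. 2 * int M + 4)"
    by (intro sum.cong) (auto simp: f_def \<sigma>_def)
  finally have "sum f ?S = (int M + 2) * int M ^ 2"
    by (simp add: card_cartesian_product power2_eq_square algebra_simps)
  moreover have "int (card (SIGMA e:?S. {0..fst e + snd e})) = sum f ?S"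
    by (subst card_SigmaI) (auto simp: f_def of_nat_sum intro!: sum.cong)
  ultimately have "real_of_int (int (card (SIGMA e:?S. {0..fst e + snd e}))) =
      real_of_int ((int M + 2) * int M ^ 2)"
    by simp
  then have "real (card (SIGMA e:?S. {0..fst e + snd e})) = (real M + 2) * real M ^ 2"
    by (simp only: of_int_of_nat_eq of_int_mult of_int_add of_int_power of_int_numeral)
  moreover have "(real M + 2) * real M ^ 2 = real M ^ 3 + 2 * real M ^ 2"
    by (simp add: algebra_simps power3_eq_cube power2_eq_square)
  moreover have "0 \<le> real M ^ 2"
    by simp
  ultimately show ?thesis
    by linarith
qed

definition strictly_straddling_pairs :: "(int \<times> int) set \<Rightarrow> ((int \<times> int) \<times> (int \<times> int)) set" where
  "strictly_straddling_pairs B =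
     {p \<in> straddling_pairs B. fst (fst p) < fst (snd p) \<and> snd (fst p) < snd (snd p)}"

lemma sum_origin_ratio_strictly_straddling_ge:
  assumes "a \<le> - int M" "int M \<le> b" "c \<le> - int M" "int M \<le> d"
  shows "real M ^ 3 \<le> sum origin_ratio (strictly_straddling_pairs (int_rect a b c d))"
proof -
  let ?K = "SIGMA e:{1..int M} \<times> {1..int M}. {0..fst e + snd e}"
  have classes_inside: "shape_class s \<subseteq> strictly_straddling_pairs (int_rect a b c d)" if "s \<in> ?K" for s
    using that assms
    by (auto simp: shape_class_def strictly_straddling_pairs_def straddling_pairs_def
        straddles_origin_def pair_shape_def int_rect_def mem_Times_iff)
  have "sum origin_ratio (shape_class s) = 1" if "s \<in> ?K" for s
    using that by (auto intro!: sum_origin_ratio_shape_class)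
  then have "real (card ?K) = (\<Sum>s\<in>?K. sum origin_ratio (shape_class s))"
    by simp
  also have "\<dots> = sum origin_ratio (\<Union>s\<in>?K. shape_class s)"
    using finite_shape_class by (intro sum.UNION_disjoint[symmetric]) (auto simp: shape_class_def)
  also have "\<dots> \<le> sum origin_ratio (strictly_straddling_pairs (int_rect a b c d))"
    using classes_inside origin_ratio_nonneg
    by (intro sum_mono2) (auto simp: strictly_straddling_pairs_def straddling_pairs_def
        finite_int_rect)
  finally show ?thesis
    using cube_le_card_shape_range[of M] by linarith
qed

section \<open>Swapping and reflecting pairs\<close>

lemma origin_ratio_swap: "origin_ratio (prod.swap p) = origin_ratio p"
  by (simp add: origin_ratio_def through_ratio_commute)

lemma origin_ratio_reflect: "origin_ratio (map_prod reflect_x reflect_x p) = origin_ratio p"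
  using through_ratio_reflect_x[of "fst p" "snd p" "(0, 0)"]
  by (simp add: origin_ratio_def map_prod_def split_beta reflect_x_def)

lemma sum_origin_ratio_Un_le:
  assumes "finite X" "finite Y"
  shows "sum origin_ratio (X \<union> Y) \<le> sum origin_ratio X + sum origin_ratio Y"
  using assms by (simp add: sum_Un sum_nonneg origin_ratio_nonneg)

lemma origin_ratio_nonzero_between:
  assumes "origin_ratio p \<noteq> 0"
  shows "(fst (fst p) \<le> 0 \<and> 0 \<le> fst (snd p) \<or> fst (snd p) \<le> 0 \<and> 0 \<le> fst (fst p)) \<and>
    (snd (fst p) \<le> 0 \<and> 0 \<le> snd (snd p) \<or> snd (snd p) \<le> 0 \<and> 0 \<le> snd (fst p))"
proof -
  have "l1_dist (fst p) (0, 0) + l1_dist (0, 0) (snd p) = l1_dist (fst p) (snd p)"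
    using assms through_ratio_eq_0 unfolding origin_ratio_def by blast
  then show ?thesis
    unfolding l1_dist_def by (auto simp: abs_if split: if_splits)
qed

text \<open>Only pairs whose bounding rectangle contains the origin contribute, and after a swap
  and/or a reflection such a pair straddles the origin.\<close>

lemma sum_origin_ratio_le_straddling:
  assumes "finite B"
  shows "sum origin_ratio (B \<times> B) \<le>
    2 * sum origin_ratio (straddling_pairs B) + 2 * sum origin_ratio (straddling_pairs (reflect_x ` B))"
proof -
  let ?S = "straddling_pairs B" and ?S' = "straddling_pairs (reflect_x ` B)"
  let ?\<rho> = "map_prod reflect_x reflect_x"
  let ?S1 = "?S \<union> prod.swap ` ?S" and ?S2 = "?\<rho> ` ?S' \<union> prod.swap ` ?\<rho> ` ?S'"
  have fin: "finite ?S" "finite ?S'"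
    using assms by (simp_all add: straddling_pairs_def)
  have cover: "{p \<in> B \<times> B. origin_ratio p \<noteq> 0} \<subseteq> ?S1 \<union> ?S2"
  proof
    fix p assume p: "p \<in> {p \<in> B \<times> B. origin_ratio p \<noteq> 0}"
    then have "?\<rho> p \<in> reflect_x ` B \<times> reflect_x ` B"
      by (auto simp: map_prod_def split_beta)
    then have "p \<in> ?S \<or> prod.swap p \<in> ?S \<or> ?\<rho> p \<in> ?S' \<or> prod.swap (?\<rho> p) \<in> ?S'"
      using p origin_ratio_nonzero_between[of p]
      by (auto simp: straddling_pairs_def straddles_origin_def reflect_x_def mem_Times_iff)
    moreover have "p = prod.swap (prod.swap p)" "p = ?\<rho> (?\<rho> p)"
      "p = prod.swap (?\<rho> (prod.swap (?\<rho> p)))"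
      by (simp_all add: reflect_x_def map_prod_def split_beta)
    ultimately show "p \<in> ?S1 \<union> ?S2"
      by (blast intro: image_eqI)
  qed
  have "sum origin_ratio (B \<times> B) = sum origin_ratio {p \<in> B \<times> B. origin_ratio p \<noteq> 0}"
    using assms by (intro sum.mono_neutral_right) auto
  also have "\<dots> \<le> sum origin_ratio (?S1 \<union> ?S2)"
    using cover fin by (intro sum_mono2) (auto simp: origin_ratio_nonneg)
  also have "\<dots> \<le> sum origin_ratio ?S + sum origin_ratio (prod.swap ` ?S)
      + (sum origin_ratio (?\<rho> ` ?S') + sum origin_ratio (prod.swap ` ?\<rho> ` ?S'))"
    using fin sum_origin_ratio_Un_le[of ?S1 ?S2] sum_origin_ratio_Un_le[of ?S "prod.swap ` ?S"]
      sum_origin_ratio_Un_le[of "?\<rho> ` ?S'" "prod.swap ` ?\<rho> ` ?S'"]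
    by simp
  also have "\<dots> = 2 * sum origin_ratio ?S + 2 * sum origin_ratio ?S'"
    by (simp add: sum.reindex inj_on_subset[OF inj_map_prod_reflect_x] comp_def
        origin_ratio_swap origin_ratio_reflect)
  finally show ?thesis .
qed

lemma sum_origin_ratio_strict_orientations:
  assumes "finite B"
  defines "T \<equiv> strictly_straddling_pairs B" and "T' \<equiv> strictly_straddling_pairs (reflect_x ` B)"
    and "\<rho> \<equiv> map_prod reflect_x reflect_x"
  shows "sum origin_ratio (T \<union> prod.swap ` T \<union> \<rho> ` T' \<union> prod.swap ` \<rho> ` T')
    = 2 * sum origin_ratio T + 2 * sum origin_ratio T'"
proof -
  let ?A1 = "T" and ?A2 = "prod.swap ` T" and ?A3 = "\<rho> ` T'" and ?A4 = "prod.swap ` \<rho> ` T'"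
  have fin: "finite T" "finite T'"
    using assms by (simp_all add: strictly_straddling_pairs_def straddling_pairs_def)
  have signs: "p \<in> ?A1 \<Longrightarrow> fst (fst p) < fst (snd p) \<and> snd (fst p) < snd (snd p)"
    "p \<in> ?A2 \<Longrightarrow> fst (fst p) > fst (snd p) \<and> snd (fst p) > snd (snd p)"
    "p \<in> ?A3 \<Longrightarrow> fst (fst p) > fst (snd p) \<and> snd (fst p) < snd (snd p)"
    "p \<in> ?A4 \<Longrightarrow> fst (fst p) < fst (snd p) \<and> snd (fst p) > snd (snd p)" for p
    by (auto simp: T_def T'_def \<rho>_def strictly_straddling_pairs_def reflect_x_def)
  have "?A1 \<inter> ?A2 = {}"
  proof (rule equals0I)
    fix p assume "p \<in> ?A1 \<inter> ?A2"
    with signs(1,2)[of p] show False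
      by auto
  qed
  moreover have "(?A1 \<union> ?A2) \<inter> ?A3 = {}"
  proof (rule equals0I)
    fix p assume "p \<in> (?A1 \<union> ?A2) \<inter> ?A3"
    then have "p \<in> ?A1 \<or> p \<in> ?A2" "p \<in> ?A3"
      by blast+
    with signs(1-3)[of p] show False
      by linarith
  qed
  moreover have "(?A1 \<union> ?A2 \<union> ?A3) \<inter> ?A4 = {}"
  proof (rule equals0I)
    fix p assume "p \<in> (?A1 \<union> ?A2 \<union> ?A3) \<inter> ?A4"
    then have "p \<in> ?A1 \<or> p \<in> ?A2 \<or> p \<in> ?A3" "p \<in> ?A4"
      by blast+
    with signs[of p] show False
      by linarith
  qed
  ultimately show ?thesis
    using fin by (simp add: sum.union_disjoint sum.reindex inj_on_subset[OF inj_map_prod_reflect_x]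
        comp_def \<rho>_def origin_ratio_swap origin_ratio_reflect)
qed

lemma sum_origin_ratio_ge_strictly_straddling:
  assumes "finite B"
  shows "2 * sum origin_ratio (strictly_straddling_pairs B)
      + 2 * sum origin_ratio (strictly_straddling_pairs (reflect_x ` B))
    \<le> sum origin_ratio {p \<in> B \<times> B. fst p \<noteq> snd p}"
proof -
  let ?T = "strictly_straddling_pairs B" and ?T' = "strictly_straddling_pairs (reflect_x ` B)"
  let ?\<rho> = "map_prod reflect_x reflect_x"
  let ?U = "?T \<union> prod.swap ` ?T \<union> ?\<rho> ` ?T' \<union> prod.swap ` ?\<rho> ` ?T'"
  have "?U \<subseteq> {p \<in> B \<times> B. fst p \<noteq> snd p}"
    by (auto simp: strictly_straddling_pairs_def straddling_pairs_def reflect_x_def)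
  then have "sum origin_ratio ?U \<le> sum origin_ratio {p \<in> B \<times> B. fst p \<noteq> snd p}"
    using assms by (intro sum_mono2) (auto simp: origin_ratio_nonneg)
  then show ?thesis
    using sum_origin_ratio_strict_orientations[OF assms] by simp
qed

section \<open>Demand in a square box\<close>

lemma Let_SOME_doubleton:
  assumes "a \<noteq> b" "f a b = f b a"
  shows "(let u = (SOME u. u \<in> {a, b}); v = (SOME v. v \<in> {a, b} - {u}) in f u v) = f a b"
proof -
  let ?u = "SOME u. u \<in> {a, b}"
  let ?v = "SOME v. v \<in> {a, b} - {?u}"
  have u: "?u \<in> {a, b}"
    by (rule someI[of _ a]) simp
  have "\<exists>v. v \<in> {a, b} - {?u}"
    using \<open>a \<noteq> b\<close> by (cases "?u = a") auto
  then have v: "?v \<in> {a, b} - {?u}"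
    by (rule someI_ex)
  have "x = a \<and> y = b \<or> x = b \<and> y = a" if "x \<in> {a, b}" "y \<in> {a, b} - {x}" for x y
    using that by auto
  from this[OF u v] have "?u = a \<and> ?v = b \<or> ?u = b \<and> ?v = a" .
  then show ?thesis
    using assms(2) by (auto simp: Let_def)
qed

lemma two_sum_unordered_pairs:
  fixes f :: "'a \<Rightarrow> 'a \<Rightarrow> 'b :: comm_semiring_1"
  assumes "finite B" and sym: "\<And>u v. u \<in> B \<Longrightarrow> v \<in> B \<Longrightarrow> f u v = f v u"
  shows "2 * (\<Sum>S\<in>{S. S \<subseteq> B \<and> card S = 2}.
      let u = (SOME u. u \<in> S); v = (SOME v. v \<in> S - {u}) in f u v)
    = (\<Sum>p\<in>{p \<in> B \<times> B. fst p \<noteq> snd p}. f (fst p) (snd p))"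
proof -
  let ?P = "{p \<in> B \<times> B. fst p \<noteq> snd p}" and ?T = "{S. S \<subseteq> B \<and> card S = 2}"
  have "(\<lambda>p. {fst p, snd p}) ` ?P \<subseteq> ?T"
    by (auto simp: card_insert_if)
  with assms(1) have "(\<Sum>p\<in>?P. f (fst p) (snd p)) =
      (\<Sum>S\<in>?T. \<Sum>p\<in>{p \<in> ?P. {fst p, snd p} = S}. f (fst p) (snd p))"
    by (intro sum.group[symmetric]) (auto intro: finite_subset[of _ "Pow B"])
  also have "\<dots> = (\<Sum>S\<in>?T. 2 * (let u = (SOME u. u \<in> S); v = (SOME v. v \<in> S - {u}) in f u v))"
  proof (intro sum.cong refl)
    fix S assume "S \<in> ?T"
    then obtain a b where S: "S = {a, b}" "a \<noteq> b" "a \<in> B" "b \<in> B"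
      by (auto simp: card_2_iff)
    then have "{p \<in> ?P. {fst p, snd p} = S} = {(a, b), (b, a)}"
      by (auto simp: doubleton_eq_iff)
    with S sym[of a b] Let_SOME_doubleton[of a b f]
    show "(\<Sum>p\<in>{p \<in> ?P. {fst p, snd p} = S}. f (fst p) (snd p)) =
        2 * (let u = (SOME u. u \<in> S); v = (SOME v. v \<in> S - {u}) in f u v)"
      by (simp add: mult_2)
  qed
  finally show ?thesis
    by (simp add: sum_distrib_left)
qed

lemma demand_int_rect:
  "2 * demand (int_rect a b c d) lattice_adj w =
     (\<Sum>p\<in>{p \<in> int_rect a b c d \<times> int_rect a b c d. fst p \<noteq> snd p}. through_ratio (fst p) (snd p) w)"
proof -
  let ?B = "int_rect a b c d"
  define f where "f u v = real (num_sp_through ?B lattice_adj u v w) / real (num_sp ?B lattice_adj u v)"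
    for u v
  have f: "f u v = through_ratio u v w" if "u \<in> ?B" "v \<in> ?B" for u v
    using that by (simp add: f_def num_sp_through_def num_sp_def shortest_paths_int_rect through_ratio_def)
  have "2 * demand ?B lattice_adj w = (\<Sum>p\<in>{p \<in> ?B \<times> ?B. fst p \<noteq> snd p}. f (fst p) (snd p))"
    unfolding demand_def f_def[symmetric]
    by (rule two_sum_unordered_pairs) (simp_all add: finite_int_rect f through_ratio_commute)
  also have "\<dots> = (\<Sum>p\<in>{p \<in> ?B \<times> ?B. fst p \<noteq> snd p}. through_ratio (fst p) (snd p) w)"
    by (intro sum.cong refl) (auto simp: f)
  finally show ?thesis .
qed

lemma box_vertices_square:
  assumes "1 \<le> m"
  shows "box_vertices (m\<^sup>2) =
    int_rect (- int ((m - 1) div 2)) (int (m div 2)) (- int ((m - 1) div 2)) (int (m div 2))"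
proof -
  have lower: "- real m < 2 * real_of_int x \<longleftrightarrow> - int ((m - 1) div 2) \<le> x" for x :: int
  proof -
    have "- real m < 2 * real_of_int x \<longleftrightarrow> - int m < 2 * x"
      by linarith
    also have "\<dots> \<longleftrightarrow> - int ((m - 1) div 2) \<le> x"
      using assms by presburger
    finally show ?thesis .
  qed
  have upper: "2 * real_of_int x \<le> real m \<longleftrightarrow> x \<le> int (m div 2)" for x :: int
  proof -
    have "2 * real_of_int x \<le> real m \<longleftrightarrow> 2 * x \<le> int m"
      by linarith
    also have "\<dots> \<longleftrightarrow> x \<le> int (m div 2)"
      by presburger
    finally show ?thesis .
  qed
  show ?thesis
    unfolding box_vertices_def int_rect_def using lower upper by auto
qed

lemma reflect_x_image_int_rect: "reflect_x ` int_rect a b c d = int_rect (- b) (- a) c d"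
proof (intro equalityI subsetI)
  fix p assume "p \<in> int_rect (- b) (- a) c d"
  then show "p \<in> reflect_x ` int_rect a b c d"
    by (intro image_eqI[of _ _ "reflect_x p"]) (auto simp: reflect_x_def int_rect_def mem_Times_iff)
qed (auto simp: reflect_x_def int_rect_def)

lemma sum_origin_ratio_straddling_int_rect_le:
  assumes "nat (1 - a) \<le> F" "nat (1 + b) \<le> F" "nat (1 - c) \<le> F" "nat (1 + d) \<le> F"
  shows "sum origin_ratio (straddling_pairs (int_rect a b c d)) \<le> 4 * real F ^ 3"
proof -
  have "sum origin_ratio (straddling_pairs (int_rect a b c d))
      \<le> real (card (pair_shape ` straddling_pairs (int_rect a b c d)))"
    by (simp add: sum_origin_ratio_straddling_le_card_shapes finite_int_rect)
  also have "\<dots> \<le> real (4 * F ^ 3)"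
    using card_shapes_straddling_int_rect[OF assms] by (simp only: of_nat_le_iff)
  finally show ?thesis
    by simp
qed

lemma demand_int_square_upper:
  fixes l h :: nat
  assumes "l \<le> h"
  shows "demand (int_rect (- int l) (int h) (- int l) (int h)) lattice_adj (0, 0) \<le> 8 * (real h + 1) ^ 3"
proof -
  let ?B = "int_rect (- int l) (int h) (- int l) (int h)"
    and ?B' = "int_rect (- int h) (int l) (- int l) (int h)"
  have "2 * demand ?B lattice_adj (0, 0) = sum origin_ratio {p \<in> ?B \<times> ?B. fst p \<noteq> snd p}"
    by (simp add: demand_int_rect origin_ratio_def)
  also have "\<dots> \<le> sum origin_ratio (?B \<times> ?B)"
    by (intro sum_mono2) (auto simp: finite_int_rect origin_ratio_nonneg)
  also have "\<dots> \<le> 2 * sum origin_ratio (straddling_pairs ?B) + 2 * sum origin_ratio (straddling_pairs ?B')"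
    using sum_origin_ratio_le_straddling[of ?B] by (simp add: finite_int_rect reflect_x_image_int_rect)
  also have "\<dots> \<le> 2 * (4 * real (h + 1) ^ 3) + 2 * (4 * real (h + 1) ^ 3)"
    using assms sum_origin_ratio_straddling_int_rect_le[of "- int l" "h + 1" "int h" "- int l" "int h"]
      sum_origin_ratio_straddling_int_rect_le[of "- int h" "h + 1" "int l" "- int l" "int h"]
    by (simp add: nat_add_distrib)
  finally show ?thesis
    by (simp add: add.commute)
qed

lemma demand_int_square_lower:
  fixes l h :: nat
  assumes "l \<le> h"
  shows "2 * real l ^ 3 \<le> demand (int_rect (- int l) (int h) (- int l) (int h)) lattice_adj (0, 0)"
proof -
  let ?B = "int_rect (- int l) (int h) (- int l) (int h)"
    and ?B' = "int_rect (- int h) (int l) (- int l) (int h)"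
  have "4 * real l ^ 3 \<le> 2 * sum origin_ratio (strictly_straddling_pairs ?B)
      + 2 * sum origin_ratio (strictly_straddling_pairs ?B')"
    using assms sum_origin_ratio_strictly_straddling_ge[of "- int l" l "int h" "- int l" "int h"]
      sum_origin_ratio_strictly_straddling_ge[of "- int h" l "int l" "- int l" "int h"]
    by simp
  also have "\<dots> \<le> sum origin_ratio {p \<in> ?B \<times> ?B. fst p \<noteq> snd p}"
    using sum_origin_ratio_ge_strictly_straddling[of ?B]
    by (simp add: finite_int_rect reflect_x_image_int_rect)
  also have "\<dots> = 2 * demand ?B lattice_adj (0, 0)"
    by (simp add: demand_int_rect origin_ratio_def)
  finally show ?thesis
    by simp
qed

lemma demand_square_bounds:
  assumes "2 \<le> m"
  shows "(real m - 2) ^ 3 / 4 \<le> demand (box_vertices (m\<^sup>2)) lattice_adj (0, 0)"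
    and "demand (box_vertices (m\<^sup>2)) lattice_adj (0, 0) \<le> (real m + 2) ^ 3"
proof -
  define l h where "l = (m - 1) div 2" and "h = m div 2"
  have "l \<le> h" "m \<le> 2 * l + 2" "2 * h \<le> m"
    unfolding l_def h_def by (simp_all add: div_le_mono)
  then have "l \<le> h" "real m \<le> real (2 * l + 2)" "real (2 * h) \<le> real m"
    by (simp_all only: of_nat_le_iff)
  then have lh: "l \<le> h" "(real m - 2) / 2 \<le> real l" "real h + 1 \<le> (real m + 2) / 2"
    by simp_all
  have box: "box_vertices (m\<^sup>2) = int_rect (- int l) (int h) (- int l) (int h)"
    using assms by (simp add: box_vertices_square l_def h_def)
  have "(real m - 2) ^ 3 / 4 = 2 * ((real m - 2) / 2) ^ 3"
    by (simp add: power_divide)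
  also have "\<dots> \<le> 2 * real l ^ 3"
    using assms lh by (simp add: power_mono)
  also have "\<dots> \<le> demand (box_vertices (m\<^sup>2)) lattice_adj (0, 0)"
    unfolding box using demand_int_square_lower[OF lh(1)] .
  finally show "(real m - 2) ^ 3 / 4 \<le> demand (box_vertices (m\<^sup>2)) lattice_adj (0, 0)" .
  have "demand (box_vertices (m\<^sup>2)) lattice_adj (0, 0) \<le> 8 * (real h + 1) ^ 3"
    unfolding box using demand_int_square_upper[OF lh(1)] .
  also have "\<dots> \<le> 8 * ((real m + 2) / 2) ^ 3"
    using lh by (simp add: power_mono)
  also have "\<dots> = (real m + 2) ^ 3"
    by (simp add: power_divide)
  finally show "demand (box_vertices (m\<^sup>2)) lattice_adj (0, 0) \<le> (real m + 2) ^ 3" .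
qed

section \<open>Asymptotics\<close>

lemma eventually_square_index:
  assumes "eventually P sequentially"
  shows "eventually (\<lambda>n. \<forall>m. n = m\<^sup>2 \<longrightarrow> P m) sequentially"
proof -
  from assms obtain N where N: "\<And>m. N \<le> m \<Longrightarrow> P m"
    by (auto simp: eventually_sequentially)
  show ?thesis
  proof (rule eventually_sequentiallyI[of "N\<^sup>2"], intro allI impI)
    fix n m assume "N\<^sup>2 \<le> n" "n = m\<^sup>2"
    then show "P m"
      by (intro N) (simp add: power2_nat_le_eq_le)
  qed
qed

lemma real_square_powr: "real (m\<^sup>2) powr 1.5 = real m ^ 3"
proof -
  have "real (m\<^sup>2) powr 1.5 = (real m powr 2) powr 1.5"
    by simp
  also have "\<dots> = real m powr (2 * 1.5)"
    by (rule powr_powr)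
  finally show ?thesis
    by simp
qed

lemma cube_shift_bounds:
  fixes x \<epsilon> :: real
  assumes x: "100 \<le> x" "3 \<le> \<epsilon> * x"
  shows "(1/4 - \<epsilon>) * x ^ 3 < (x - 2) ^ 3 / 4" "(x + 2) ^ 3 < (9/8 + \<epsilon>) * x ^ 3"
proof -
  have "100 * x \<le> x\<^sup>2" "100 * x\<^sup>2 \<le> x ^ 3" "3 * x\<^sup>2 \<le> \<epsilon> * x ^ 3"
    using mult_right_mono[OF x(1), of x] mult_right_mono[OF x(1), of "x\<^sup>2"]
      mult_right_mono[OF x(2), of "x\<^sup>2"] x(1)
    by (simp_all add: power2_eq_square power3_eq_cube algebra_simps)
  moreover have "(x - 2) ^ 3 = x ^ 3 - 6 * x\<^sup>2 + 12 * x - 8" "(x + 2) ^ 3 = x ^ 3 + 6 * x\<^sup>2 + 12 * x + 8"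
    by (simp_all add: power2_eq_square power3_eq_cube algebra_simps)
  ultimately have "x ^ 3 - 4 * (\<epsilon> * x ^ 3) < (x - 2) ^ 3" "8 * (x + 2) ^ 3 < 9 * x ^ 3 + 8 * (\<epsilon> * x ^ 3)"
    using x(1) by linarith+
  then show "(1/4 - \<epsilon>) * x ^ 3 < (x - 2) ^ 3 / 4" "(x + 2) ^ 3 < (9/8 + \<epsilon>) * x ^ 3"
    by (simp_all add: field_simps)
qed

lemma eventually_cube_shift_bounds:
  fixes \<epsilon> :: real
  assumes "0 < \<epsilon>"
  shows "\<forall>\<^sub>F m in sequentially. 2 \<le> m \<and> (1/4 - \<epsilon>) * real m ^ 3 < (real m - 2) ^ 3 / 4
      \<and> (real m + 2) ^ 3 < (9/8 + \<epsilon>) * real m ^ 3"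
proof (rule eventually_sequentiallyI[of "nat \<lceil>3 / \<epsilon>\<rceil> + 100"])
  fix m assume m: "nat \<lceil>3 / \<epsilon>\<rceil> + 100 \<le> m"
  then have "3 / \<epsilon> \<le> real m"
    by linarith
  then have "100 \<le> real m" "3 \<le> \<epsilon> * real m"
    using m assms by (auto simp: pos_divide_le_eq mult.commute)
  with m cube_shift_bounds show "2 \<le> m \<and> (1/4 - \<epsilon>) * real m ^ 3 < (real m - 2) ^ 3 / 4
      \<and> (real m + 2) ^ 3 < (9/8 + \<epsilon>) * real m ^ 3"
    by simp
qed

theorem mainTheorem13:
  shows "\<forall>\<epsilon>>0. \<forall>\<^sub>F n in sequentially. (\<exists>m::nat. n = m\<^sup>2) \<longrightarrow>
     (1/4 - \<epsilon>) * real n powr 1.5 < demand (box_vertices n) lattice_adj (0, 0) \<and>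
     demand (box_vertices n) lattice_adj (0, 0) < (9/8 + \<epsilon>) * real n powr 1.5"
proof (intro allI impI)
  fix \<epsilon> :: real assume "0 < \<epsilon>"
  have "\<forall>\<^sub>F m in sequentially.
      (1/4 - \<epsilon>) * real (m\<^sup>2) powr 1.5 < demand (box_vertices (m\<^sup>2)) lattice_adj (0, 0) \<and>
      demand (box_vertices (m\<^sup>2)) lattice_adj (0, 0) < (9/8 + \<epsilon>) * real (m\<^sup>2) powr 1.5"
    using eventually_cube_shift_bounds[OF \<open>0 < \<epsilon>\<close>]
  proof eventually_elim
    case (elim m)
    with demand_square_bounds[of m] show ?case
      unfolding real_square_powr by linarith
  qed
  from eventually_square_index[OF this] show "\<forall>\<^sub>F n in sequentially. (\<exists>m::nat. n = m\<^sup>2) \<longrightarrow>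
     (1/4 - \<epsilon>) * real n powr 1.5 < demand (box_vertices n) lattice_adj (0, 0) \<and>
     demand (box_vertices n) lattice_adj (0, 0) < (9/8 + \<epsilon>) * real n powr 1.5"
    by (rule eventually_mono) blast
qed

end
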